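(* Let $\Phi:\{0,1\}^n\to\{0,1\}^n$, $\mu\in\{0,1\}^n$ and $\rho\in P_n$. Then: a) $\overline{W}[\Phi^\rho(\mu,\cdot)]$ is p-invariant; b) if $\underline{W}[\Phi^\rho(\mu,\cdot)]\neq\emptyset$, then $\underline{W}[\Phi^\rho(\mu,\cdot)]$ is n-invariant; c) if $\underline{W}[\omega_\rho(\mu)]\neq\emptyset$, then $\underline{W}[\omega_\rho(\mu)]$ is n-invariant.
   Context: Let $\mathbf{B}=\{0,1\}$ (discrete topology), $n\ge1$, $\Phi:\mathbf{B}^n\to\mathbf{B}^n$. For $\nu\in\mathbf{B}^n$: $\Phi^\nu_i(\mu)=\mu_i$ if $\nu_i=0$, $=\Phi_i(\mu)$ if $\nu_i=1$; $\Phi^{\alpha^0\dots\alpha^k}=\Phi^{\alpha^k}\circ\cdots\circ\Phi^{\alpha^0}$. A sequence $(\alpha^k)_{k\in\mathbf{N}}$ in $\mathbf{B}^n$ is progressive if each $\{k:\alpha^k_i=1\}$ is infinite. $Seq$ = strictly increasing real sequences unbounded above. $P_n$ = functions $\rho:\mathbf{R}\to\mathbf{B}^n$ with $\rho(t_k)=\alpha^k$, $\rho(t)=0$ for $t\notin\{t_k\}$, $\alpha$ progressive, $(t_k)\in Seq$. Orbit: $\Phi^\rho(\mu,t)=\mu$ for $t<t_0$, $=\Phi^{\alpha^0\dots\alpha^k}(\mu)$ for $t\in[t_k,t_{k+1})$; $Or_\rho(\mu)=\{\Phi^\rho(\mu,t):t\in\mathbf{R}\}$. $\omega_\rho(\mu)=\{\mu':\exists(s_k)\in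 Seq,\ \Phi^\rho(\mu,s_k)=\mu'$ for all large $k\}$. Basins: $\overline{W}[\Phi^\rho(\mu,\cdot)]=\{\mu':\exists\rho'\in P_n,\exists t',\forall t\ge t',\ \Phi^{\rho'}(\mu',t)=\Phi^\rho(\mu,t)\}$, $\underline{W}[\Phi^\rho(\mu,\cdot)]=\{\mu':\forall\rho'\in P_n,\exists t',\forall t\ge t',\ \Phi^{\rho'}(\mu',t)=\Phi^\rho(\mu,t)\}$, $\underline{W}[\omega_\rho(\mu)]=\{\mu':\forall\rho'\in P_n,\ \omega_{\rho'}(\mu')=\omega_\rho(\mu)\}$. A nonempty set $A\subset\mathbf{B}^n$ is p-invariant if for every $\mu\in A$ there is $\rho\in P_n$ with $Or_\rho(\mu)\subset A$, and n-invariant if for every $\mu\in A$ and every $\rho\in P_n$, $Or_\rho(\mu)\subset A$. *)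

theory Defs
  imports Complex_Main
begin

(* States of B^n are modelled as functions 'n \<Rightarrow> bool, with 'n a finite index type
   (CARD('n) = n); False = 0, True = 1. *)

type_synonym 'n state = "'n \<Rightarrow> bool"

definition zero_state :: "'n state" where
  "zero_state = (\<lambda>i. False)"

definition upd :: "('n state \<Rightarrow> 'n state) \<Rightarrow> 'n state \<Rightarrow> 'n state \<Rightarrow> 'n state" where
  "upd \<Phi> \<nu> \<mu> = (\<lambda>i. if \<nu> i then \<Phi> \<mu> i else \<mu> i)"

fun upd_seq :: "('n state \<Rightarrow> 'n state) \<Rightarrow> (nat \<Rightarrow> 'n state) \<Rightarrow> nat \<Rightarrow> 'n state \<Rightarrow> 'n state" where
  "upd_seq \<Phi> \<alpha> 0 \<mu> = upd \<Phi> (\<alpha> 0) \<mu>"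
| "upd_seq \<Phi> \<alpha> (Suc k) \<mu> = upd \<Phi> (\<alpha> (Suc k)) (upd_seq \<Phi> \<alpha> k \<mu>)"

definition progressive :: "(nat \<Rightarrow> 'n state) \<Rightarrow> bool" where
  "progressive \<alpha> \<longleftrightarrow> (\<forall>i. infinite {k. \<alpha> k i})"

definition Seq :: "(nat \<Rightarrow> real) set" where
  "Seq = {t. strict_mono t \<and> (\<forall>M. \<exists>k. t k > M)}"

definition rep :: "(real \<Rightarrow> 'n state) \<Rightarrow> (nat \<Rightarrow> 'n state) \<Rightarrow> (nat \<Rightarrow> real) \<Rightarrow> bool" where
  "rep \<rho> \<alpha> t \<longleftrightarrow> progressive \<alpha> \<and> t \<in> Seq \<and> (\<forall>k. \<rho> (t k) = \<alpha> k)
      \<and> (\<forall>s. s \<notin> range t \<longrightarrow> \<rho> s = zero_state)"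

definition P :: "(real \<Rightarrow> 'n state) set" where
  "P = {\<rho>. \<exists>\<alpha> t. rep \<rho> \<alpha> t}"

definition orbit_rep :: "('n state \<Rightarrow> 'n state) \<Rightarrow> (nat \<Rightarrow> 'n state) \<Rightarrow> (nat \<Rightarrow> real) \<Rightarrow> 'n state \<Rightarrow> real \<Rightarrow> 'n state" where
  "orbit_rep \<Phi> \<alpha> t \<mu> s =
     (if s < t 0 then \<mu> else upd_seq \<Phi> \<alpha> (GREATEST k. t k \<le> s) \<mu>)"

(* \<Phi>^\<rho>(\<mu>, s): computed from some representation of \<rho>; the value does not depend on
   the representation chosen (different representations differ only by inserting
   zero updates, which act as the identity). *)
definition orbit :: "('n state \<Rightarrow> 'n state) \<Rightarrow> (real \<Rightarrow> 'n state) \<Rightarrow> 'n state \<Rightarrow> real \<Rightarrow> 'n state" where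
  "orbit \<Phi> \<rho> \<mu> s = (let r = (SOME r. rep \<rho> (fst r) (snd r)) in orbit_rep \<Phi> (fst r) (snd r) \<mu> s)"

definition Or :: "('n state \<Rightarrow> 'n state) \<Rightarrow> (real \<Rightarrow> 'n state) \<Rightarrow> 'n state \<Rightarrow> 'n state set" where
  "Or \<Phi> \<rho> \<mu> = range (orbit \<Phi> \<rho> \<mu>)"

definition omega :: "('n state \<Rightarrow> 'n state) \<Rightarrow> (real \<Rightarrow> 'n state) \<Rightarrow> 'n state \<Rightarrow> 'n state set" where
  "omega \<Phi> \<rho> \<mu> = {\<mu>'. \<exists>s \<in> Seq. \<exists>K. \<forall>k\<ge>K. orbit \<Phi> \<rho> \<mu> (s k) = \<mu>'}"

definition W_upper :: "('n state \<Rightarrow> 'n state) \<Rightarrow> (real \<Rightarrow> 'n state) \<Rightarrow> 'n state \<Rightarrow> 'n state set" where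
  "W_upper \<Phi> \<rho> \<mu> = {\<mu>'. \<exists>\<rho>' \<in> P. \<exists>t'. \<forall>s\<ge>t'. orbit \<Phi> \<rho>' \<mu>' s = orbit \<Phi> \<rho> \<mu> s}"

definition W_lower :: "('n state \<Rightarrow> 'n state) \<Rightarrow> (real \<Rightarrow> 'n state) \<Rightarrow> 'n state \<Rightarrow> 'n state set" where
  "W_lower \<Phi> \<rho> \<mu> = {\<mu>'. \<forall>\<rho>' \<in> P. \<exists>t'. \<forall>s\<ge>t'. orbit \<Phi> \<rho>' \<mu>' s = orbit \<Phi> \<rho> \<mu> s}"

definition W_lower_omega :: "('n state \<Rightarrow> 'n state) \<Rightarrow> (real \<Rightarrow> 'n state) \<Rightarrow> 'n state \<Rightarrow> 'n state set" where
  "W_lower_omega \<Phi> \<rho> \<mu> = {\<mu>'. \<forall>\<rho>' \<in> P. omega \<Phi> \<rho>' \<mu>' = omega \<Phi> \<rho> \<mu>}"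

definition p_invariant :: "('n state \<Rightarrow> 'n state) \<Rightarrow> 'n state set \<Rightarrow> bool" where
  "p_invariant \<Phi> A \<longleftrightarrow> A \<noteq> {} \<and> (\<forall>\<mu>\<in>A. \<exists>\<rho>\<in>P. Or \<Phi> \<rho> \<mu> \<subseteq> A)"

definition n_invariant :: "('n state \<Rightarrow> 'n state) \<Rightarrow> 'n state set \<Rightarrow> bool" where
  "n_invariant \<Phi> A \<longleftrightarrow> A \<noteq> {} \<and> (\<forall>\<mu>\<in>A. \<forall>\<rho>\<in>P. Or \<Phi> \<rho> \<mu> \<subseteq> A)"

end

theory Submission
  imports Defs
begin

text \<open>
Everything rests on two ways of re-routing orbits. First, a point \<open>\<nu>\<close> on an orbit
\<open>\<Phi>\<^sup>\<rho>(\<mu>,\<cdot>)\<close> has an orbit that eventually agrees with \<open>\<Phi>\<^sup>\<rho>(\<mu>,\<cdot>)\<close>: drop the events of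
\<open>\<rho>\<close> that led to \<open>\<nu>\<close>. Second, any orbit of \<open>\<nu>\<close> is eventually an orbit of \<open>\<mu>\<close>:
first replay those events, then continue with the new signal. Dropping or prepending
finitely many events keeps signals progressive. Hence the upper basin contains the orbits
that witness membership of its points, and the lower basins, being defined by a
condition on all orbits, are closed under following any orbit.
\<close>

definition upds :: "('n state \<Rightarrow> 'n state) \<Rightarrow> (nat \<Rightarrow> 'n state) \<Rightarrow> nat \<Rightarrow> 'n state \<Rightarrow> 'n state" where
  "upds \<Phi> \<alpha> n \<mu> = foldl (\<lambda>m k. upd \<Phi> (\<alpha> k) m) \<mu> [0..<n]"

lemma upd_zero_state [simp]: "upd \<Phi> zero_state \<mu> = \<mu>"
  by (simp add: upd_def zero_state_def)

lemma upd_seq_eq_upds: "upd_seq \<Phi> \<alpha> k \<mu> = upds \<Phi> \<alpha> (Suc k) \<mu>"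
  by (induction k) (auto simp: upds_def)

lemma upds_add: "upds \<Phi> \<alpha> (m + n) \<mu> = upds \<Phi> (\<lambda>k. \<alpha> (m + k)) n (upds \<Phi> \<alpha> m \<mu>)"
proof -
  have "[0..<m + n] = [0..<m] @ map (\<lambda>k. m + k) [0..<n]"
    by (induction n) auto
  then show ?thesis by (simp add: upds_def foldl_map)
qed

lemma upds_cong: "(\<And>k. k < n \<Longrightarrow> \<alpha> k = \<beta> k) \<Longrightarrow> upds \<Phi> \<alpha> n \<mu> = upds \<Phi> \<beta> n \<mu>"
  unfolding upds_def by (rule foldl_cong) auto

lemma Seq_shift:
  assumes "t \<in> Seq" shows "(\<lambda>k. t (m + k)) \<in> Seq"
proof -
  have mono: "strict_mono t" and unbounded: "\<forall>M. \<exists>k. M < t k"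
    using assms by (auto simp: Seq_def)
  have "\<exists>k. M < t (m + k)" for M
  proof -
    obtain k where "M < t k" using unbounded by blast
    also have "t k \<le> t (m + k)" using mono by (simp add: strict_mono_less_eq)
    finally show ?thesis by blast
  qed
  with mono show ?thesis by (simp add: Seq_def strict_mono_def)
qed

lemma Seq_prepend:
  assumes "t \<in> Seq"
  shows "(\<lambda>k. if k < m then t 0 - real (m - k) else t (k - m)) \<in> Seq"
    (is "?t \<in> Seq")
proof -
  have mono: "strict_mono t" and unbounded: "\<forall>M. \<exists>k. M < t k"
    using assms by (auto simp: Seq_def)
  have "?t k < ?t (Suc k)" for k
    using strict_monoD[OF mono, of "k - m" "Suc k - m"]
    by (cases "Suc k < m"; cases "Suc k = m") (auto simp: Suc_diff_le)
  moreover have "\<exists>k. M < ?t k" for M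
  proof -
    obtain k where "M < t k" using unbounded by blast
    then show ?thesis by (intro exI[of _ "m + k"]) simp
  qed
  ultimately show ?thesis by (simp add: Seq_def strict_mono_Suc_iff)
qed

lemma filterlim_Seq_at_top:
  assumes "t \<in> Seq" shows "filterlim t at_top sequentially"
  unfolding filterlim_at_top eventually_sequentially
proof
  fix M
  have mono: "strict_mono t" using assms by (simp add: Seq_def)
  obtain K where K: "M < t K" using assms by (auto simp: Seq_def)
  have "M \<le> t k" if "K \<le> k" for k
  proof -
    have "t K \<le> t k" using mono that by (simp add: strict_mono_less_eq)
    with K show ?thesis by simp
  qed
  then show "\<exists>K. \<forall>k\<ge>K. M \<le> t k" by blast
qed

lemma progressive_shift: "progressive \<alpha> \<Longrightarrow> progressive (\<lambda>k. \<alpha> (m + k))"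
  unfolding progressive_def
proof safe
  fix i assume "\<forall>i. infinite {k. \<alpha> k i}" and "finite {k. \<alpha> (m + k) i}"
  moreover have "{k. \<alpha> k i} \<subseteq> {..<m} \<union> (\<lambda>k. m + k) ` {k. \<alpha> (m + k) i}"
    by (auto simp: image_iff) (metis le_add_diff_inverse not_less)
  ultimately show False by (meson finite_Un finite_imageI finite_lessThan finite_subset)
qed

lemma progressive_prepend:
  assumes "progressive \<beta>" shows "progressive (\<lambda>k. if k < m then \<alpha> k else \<beta> (k - m))"
  unfolding progressive_def
proof
  fix i
  have "(\<lambda>j. m + j) ` {j. \<beta> j i} \<subseteq> {k. if k < m then \<alpha> k i else \<beta> (k - m) i}"
    by auto
  moreover have "infinite ((\<lambda>j. m + j) ` {j. \<beta> j i})"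
    using assms by (simp add: progressive_def finite_image_iff)
  ultimately show "infinite {k. (if k < m then \<alpha> k else \<beta> (k - m)) i}"
    by (simp add: if_distrib) (meson finite_subset)
qed

text \<open>For \<open>t \<in> Seq\<close> this is the number of event times \<open>t k \<le> s\<close>.\<close>

definition count_upto :: "(nat \<Rightarrow> real) \<Rightarrow> real \<Rightarrow> nat" where
  "count_upto t s = (LEAST k. s < t k)"

lemma Seq_le_iff_less_count_upto:
  assumes "t \<in> Seq" shows "t k \<le> s \<longleftrightarrow> k < count_upto t s"
proof
  have mono: "strict_mono t" using assms by (simp add: Seq_def)
  obtain K where "s < t K" using assms by (auto simp: Seq_def)
  then have "s < t (count_upto t s)" unfolding count_upto_def by (rule LeastI)
  then show "t k \<le> s \<Longrightarrow> k < count_upto t s"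
    using mono by (meson leI less_le_not_le order_trans strict_mono_less_eq)
  show "k < count_upto t s \<Longrightarrow> t k \<le> s"
    unfolding count_upto_def by (metis not_less_Least not_less)
qed

lemma count_upto_eqI:
  assumes "t \<in> Seq" and "\<And>k. t k \<le> s \<longleftrightarrow> k < n" shows "count_upto t s = n"
  using Seq_le_iff_less_count_upto[OF assms(1)] assms(2) by (metis linorder_neqE_nat less_irrefl)

lemma orbit_rep_eq_upds:
  assumes "t \<in> Seq" shows "orbit_rep \<Phi> \<alpha> t \<mu> s = upds \<Phi> \<alpha> (count_upto t s) \<mu>"
proof (cases "s < t 0")
  case True
  then have "count_upto t s = 0"
    using Seq_le_iff_less_count_upto[OF assms, of 0 s] by simp
  with True show ?thesis by (simp add: orbit_rep_def upds_def)
next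
  case False
  then have pos: "0 < count_upto t s"
    using Seq_le_iff_less_count_upto[OF assms, of 0 s] by simp
  have "(GREATEST k. t k \<le> s) = count_upto t s - 1"
    using pos by (intro Greatest_equality) (auto simp: Seq_le_iff_less_count_upto[OF assms])
  with False pos show ?thesis by (simp add: orbit_rep_def upd_seq_eq_upds)
qed

lemma count_upto_shift:
  assumes "t \<in> Seq" "t' \<in> Seq"
    and "\<And>k. k < m \<Longrightarrow> t k \<le> s" and "\<And>k. t (m + k) = t' k"
  shows "count_upto t s = m + count_upto t' s"
proof (rule count_upto_eqI[OF assms(1)])
  fix k
  show "t k \<le> s \<longleftrightarrow> k < m + count_upto t' s"
  proof (cases "k < m")
    case False
    then obtain j where "k = m + j" by (metis le_add_diff_inverse not_less)
    then show ?thesis using assms(4) Seq_le_iff_less_count_upto[OF assms(2)] by simp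
  qed (simp add: assms(3))
qed

text \<open>The orbit read off \<open>\<rho>\<close> itself, without choosing a representation; it shows that
  \<open>orbit\<close> does not depend on the representation picked by \<open>SOME\<close>.\<close>

definition orbit_canonical ::
    "('n state \<Rightarrow> 'n state) \<Rightarrow> (real \<Rightarrow> 'n state) \<Rightarrow> 'n state \<Rightarrow> real \<Rightarrow> 'n state" where
  "orbit_canonical \<Phi> \<rho> \<mu> s =
     foldl (\<lambda>m x. upd \<Phi> (\<rho> x) m) \<mu> (sorted_list_of_set {x. \<rho> x \<noteq> zero_state \<and> x \<le> s})"

lemma foldl_upd_filter_nonzero:
  "foldl (\<lambda>m x. upd \<Phi> (\<rho> x) m) \<mu> (filter (\<lambda>x. \<rho> x \<noteq> zero_state) xs)
     = foldl (\<lambda>m x. upd \<Phi> (\<rho> x) m) \<mu> xs"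
  by (induction xs arbitrary: \<mu>) auto

lemma sorted_list_of_set_strict_sorted: "sorted_wrt (<) xs \<Longrightarrow> sorted_list_of_set (set xs) = xs"
  by (simp add: sorted_list_of_set_sort_remdups strict_sorted_iff distinct_remdups_id sorted_sort_id)

lemma orbit_canonical_eq_upds:
  assumes "rep \<rho> \<alpha> t" shows "orbit_canonical \<Phi> \<rho> \<mu> s = upds \<Phi> \<alpha> (count_upto t s) \<mu>"
proof -
  have t: "t \<in> Seq" and \<alpha>: "\<And>k. \<alpha> k = \<rho> (t k)"
    and zero: "\<And>x. x \<notin> range t \<Longrightarrow> \<rho> x = zero_state"
    using assms by (auto simp: rep_def)
  define xs where "xs = map t [0..<count_upto t s]"
  have sorted: "sorted_wrt (<) xs"
    using t by (simp add: xs_def sorted_wrt_map Seq_def strict_mono_def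
        sorted_wrt_mono_rel[OF _ sorted_wrt_upt])
  have support: "{x. \<rho> x \<noteq> zero_state \<and> x \<le> s} = set (filter (\<lambda>x. \<rho> x \<noteq> zero_state) xs)"
    using zero by (auto simp: xs_def Seq_le_iff_less_count_upto[OF t])
      (metis Seq_le_iff_less_count_upto[OF t] atLeastLessThan_iff imageI rangeE zero_le)
  have "sorted_list_of_set {x. \<rho> x \<noteq> zero_state \<and> x \<le> s} = filter (\<lambda>x. \<rho> x \<noteq> zero_state) xs"
    unfolding support by (rule sorted_list_of_set_strict_sorted[OF sorted_wrt_filter[OF sorted]])
  then have "orbit_canonical \<Phi> \<rho> \<mu> s = foldl (\<lambda>m x. upd \<Phi> (\<rho> x) m) \<mu> xs"
    by (simp add: orbit_canonical_def foldl_upd_filter_nonzero)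
  then show ?thesis by (simp add: xs_def upds_def foldl_map \<alpha>)
qed

lemma orbit_eq_upds:
  assumes "rep \<rho> \<alpha> t" shows "orbit \<Phi> \<rho> \<mu> s = upds \<Phi> \<alpha> (count_upto t s) \<mu>"
proof -
  define r where "r = (SOME r. rep \<rho> (fst r) (snd r))"
  have r: "rep \<rho> (fst r) (snd r)"
    unfolding r_def using assms by (intro someI_ex[of "\<lambda>r. rep \<rho> (fst r) (snd r)" ]) auto
  have "orbit \<Phi> \<rho> \<mu> s = orbit_rep \<Phi> (fst r) (snd r) \<mu> s"
    by (simp add: orbit_def r_def Let_def)
  also have "\<dots> = orbit_canonical \<Phi> \<rho> \<mu> s"
    using r by (simp add: rep_def orbit_rep_eq_upds orbit_canonical_eq_upds)
  also have "\<dots> = upds \<Phi> \<alpha> (count_upto t s) \<mu>"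
    by (rule orbit_canonical_eq_upds[OF assms])
  finally show ?thesis .
qed

definition signal :: "(nat \<Rightarrow> 'n state) \<Rightarrow> (nat \<Rightarrow> real) \<Rightarrow> real \<Rightarrow> 'n state" where
  "signal \<alpha> t x = (if x \<in> range t then \<alpha> (inv t x) else zero_state)"

lemma rep_signal:
  assumes "t \<in> Seq" "progressive \<alpha>" shows "rep (signal \<alpha> t) \<alpha> t"
proof -
  have "inj t" using assms(1) by (simp add: Seq_def strict_mono_imp_inj_on)
  then show ?thesis using assms by (auto simp: rep_def signal_def)
qed

lemma signal_in_P: "t \<in> Seq \<Longrightarrow> progressive \<alpha> \<Longrightarrow> signal \<alpha> t \<in> P"
  using rep_signal unfolding P_def by blast

lemma orbit_signal:
  "t \<in> Seq \<Longrightarrow> progressive \<alpha> \<Longrightarrow> orbit \<Phi> (signal \<alpha> t) \<mu> s = upds \<Phi> \<alpha> (count_upto t s) \<mu>"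
  by (rule orbit_eq_upds[OF rep_signal])

lemma orbit_tail:
  assumes "\<rho> \<in> P" "\<nu> \<in> Or \<Phi> \<rho> \<mu>"
  shows "\<exists>\<rho>'\<in>P. \<forall>\<^sub>F s in at_top. orbit \<Phi> \<rho>' \<nu> s = orbit \<Phi> \<rho> \<mu> s"
proof -
  obtain \<alpha> t where r: "rep \<rho> \<alpha> t" using assms(1) by (auto simp: P_def)
  then have t: "t \<in> Seq" and \<alpha>: "progressive \<alpha>" by (auto simp: rep_def)
  obtain s0 where \<nu>: "\<nu> = orbit \<Phi> \<rho> \<mu> s0" using assms(2) by (auto simp: Or_def)
  define m where "m = count_upto t s0"
  define \<alpha>' where "\<alpha>' = (\<lambda>k. \<alpha> (m + k))"
  define t' where "t' = (\<lambda>k. t (m + k))"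
  have t': "t' \<in> Seq" unfolding t'_def by (rule Seq_shift[OF t])
  have \<alpha>': "progressive \<alpha>'" unfolding \<alpha>'_def by (rule progressive_shift[OF \<alpha>])
  have "orbit \<Phi> (signal \<alpha>' t') \<nu> s = orbit \<Phi> \<rho> \<mu> s" if "s0 \<le> s" for s
  proof -
    have "count_upto t s = m + count_upto t' s"
    proof (rule count_upto_shift[OF t t'])
      show "t k \<le> s" if "k < m" for k
        using that \<open>s0 \<le> s\<close> Seq_le_iff_less_count_upto[OF t, of k s0] by (simp add: m_def)
    qed (simp add: t'_def)
    then have "orbit \<Phi> \<rho> \<mu> s = upds \<Phi> \<alpha> (m + count_upto t' s) \<mu>"
      by (simp only: orbit_eq_upds[OF r])
    also have "\<dots> = upds \<Phi> \<alpha>' (count_upto t' s) \<nu>"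
      unfolding upds_add \<nu> orbit_eq_upds[OF r] m_def \<alpha>'_def ..
    also have "\<dots> = orbit \<Phi> (signal \<alpha>' t') \<nu> s"
      by (simp only: orbit_signal[OF t' \<alpha>'])
    finally show ?thesis ..
  qed
  then show ?thesis using signal_in_P[OF t' \<alpha>'] by (auto simp: eventually_at_top_linorder)
qed

text \<open>The new signal replays the first \<open>m\<close> events of \<open>\<rho>\<close>, which lead from \<open>\<mu>\<close> to \<open>\<nu>\<close>,
  at times just before the first event of \<open>\<rho>'\<close>.\<close>

lemma orbit_splice:
  assumes "\<rho> \<in> P" "\<rho>' \<in> P" "\<nu> \<in> Or \<Phi> \<rho> \<mu>"
  shows "\<exists>\<rho>''\<in>P. \<forall>\<^sub>F s in at_top. orbit \<Phi> \<rho>'' \<mu> s = orbit \<Phi> \<rho>' \<nu> s"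
proof -
  obtain \<alpha> t where r: "rep \<rho> \<alpha> t" using assms(1) by (auto simp: P_def)
  obtain \<beta> u where r': "rep \<rho>' \<beta> u" using assms(2) by (auto simp: P_def)
  then have u: "u \<in> Seq" and \<beta>: "progressive \<beta>" by (auto simp: rep_def)
  obtain s0 where \<nu>: "\<nu> = orbit \<Phi> \<rho> \<mu> s0" using assms(3) by (auto simp: Or_def)
  define m where "m = count_upto t s0"
  define \<gamma> where "\<gamma> = (\<lambda>k. if k < m then \<alpha> k else \<beta> (k - m))"
  define v where "v = (\<lambda>k. if k < m then u 0 - real (m - k) else u (k - m))"
  have v: "v \<in> Seq" unfolding v_def by (rule Seq_prepend[OF u])
  have \<gamma>: "progressive \<gamma>" unfolding \<gamma>_def by (rule progressive_prepend[OF \<beta>])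
  have "orbit \<Phi> (signal \<gamma> v) \<mu> s = orbit \<Phi> \<rho>' \<nu> s" if "u 0 \<le> s" for s
  proof -
    have "count_upto v s = m + count_upto u s"
      using that by (intro count_upto_shift[OF v u]) (auto simp: v_def)
    moreover have "upds \<Phi> \<gamma> m \<mu> = upds \<Phi> \<alpha> m \<mu>"
      by (rule upds_cong) (simp add: \<gamma>_def)
    moreover have "(\<lambda>k. \<gamma> (m + k)) = \<beta>"
      by (simp add: \<gamma>_def)
    ultimately show ?thesis
      by (simp add: orbit_signal[OF v \<gamma>] orbit_eq_upds[OF r'] orbit_eq_upds[OF r] upds_add \<nu> m_def)
  qed
  then show ?thesis using signal_in_P[OF v \<gamma>] by (auto simp: eventually_at_top_linorder)
qed

lemma omega_eq_if_eventually_eq: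
  assumes "\<forall>\<^sub>F s in at_top. orbit \<Phi> \<rho> \<mu> s = orbit \<Phi> \<rho>' \<mu>' s"
  shows "omega \<Phi> \<rho> \<mu> = omega \<Phi> \<rho>' \<mu>'"
proof -
  have subset: "omega \<Phi> \<rho>1 \<mu>1 \<subseteq> omega \<Phi> \<rho>2 \<mu>2"
    if eq: "\<forall>\<^sub>F s in at_top. orbit \<Phi> \<rho>1 \<mu>1 s = orbit \<Phi> \<rho>2 \<mu>2 s" for \<rho>1 \<mu>1 \<rho>2 \<mu>2
  proof
    fix x assume "x \<in> omega \<Phi> \<rho>1 \<mu>1"
    then obtain sq where sq: "sq \<in> Seq" and lim: "\<forall>\<^sub>F k in sequentially. orbit \<Phi> \<rho>1 \<mu>1 (sq k) = x"
      by (auto simp: omega_def eventually_sequentially)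
    have "\<forall>\<^sub>F k in sequentially. orbit \<Phi> \<rho>1 \<mu>1 (sq k) = orbit \<Phi> \<rho>2 \<mu>2 (sq k)"
      by (rule eventually_compose_filterlim[OF eq filterlim_Seq_at_top[OF sq]])
    with lim have "\<forall>\<^sub>F k in sequentially. orbit \<Phi> \<rho>2 \<mu>2 (sq k) = x"
      by eventually_elim simp
    with sq show "x \<in> omega \<Phi> \<rho>2 \<mu>2"
      by (auto simp: omega_def eventually_sequentially)
  qed
  have "\<forall>\<^sub>F s in at_top. orbit \<Phi> \<rho>' \<mu>' s = orbit \<Phi> \<rho> \<mu> s"
    using assms by eventually_elim simp
  then show ?thesis
    by (rule subset_antisym[OF subset[OF assms] subset])
qed

lemma W_upper_iff:
  "\<mu>' \<in> W_upper \<Phi> \<rho> \<mu> \<longleftrightarrow> (\<exists>\<rho>'\<in>P. \<forall>\<^sub>F s in at_top. orbit \<Phi> \<rho>' \<mu>' s = orbit \<Phi> \<rho> \<mu> s)"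
  by (simp add: W_upper_def eventually_at_top_linorder)

lemma W_lower_iff:
  "\<mu>' \<in> W_lower \<Phi> \<rho> \<mu> \<longleftrightarrow> (\<forall>\<rho>'\<in>P. \<forall>\<^sub>F s in at_top. orbit \<Phi> \<rho>' \<mu>' s = orbit \<Phi> \<rho> \<mu> s)"
  by (simp add: W_lower_def eventually_at_top_linorder)

lemma p_invariant_W_upper:
  assumes "\<rho> \<in> P" shows "p_invariant \<Phi> (W_upper \<Phi> \<rho> \<mu>)"
  unfolding p_invariant_def
proof (intro conjI ballI)
  have "\<mu> \<in> W_upper \<Phi> \<rho> \<mu>"
    using assms by (auto simp: W_upper_iff intro!: bexI[of _ \<rho>])
  then show "W_upper \<Phi> \<rho> \<mu> \<noteq> {}" by blast
  fix \<mu>' assume "\<mu>' \<in> W_upper \<Phi> \<rho> \<mu>"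
  then obtain \<rho>' where \<rho>': "\<rho>' \<in> P" and eq: "\<forall>\<^sub>F s in at_top. orbit \<Phi> \<rho>' \<mu>' s = orbit \<Phi> \<rho> \<mu> s"
    by (auto simp: W_upper_iff)
  have "Or \<Phi> \<rho>' \<mu>' \<subseteq> W_upper \<Phi> \<rho> \<mu>"
  proof
    fix \<nu> assume "\<nu> \<in> Or \<Phi> \<rho>' \<mu>'"
    then obtain \<rho>'' where \<rho>'': "\<rho>'' \<in> P"
      and tail: "\<forall>\<^sub>F s in at_top. orbit \<Phi> \<rho>'' \<nu> s = orbit \<Phi> \<rho>' \<mu>' s"
      using orbit_tail[OF \<rho>'] by blast
    from tail eq have "\<forall>\<^sub>F s in at_top. orbit \<Phi> \<rho>'' \<nu> s = orbit \<Phi> \<rho> \<mu> s"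
      by eventually_elim simp
    with \<rho>'' show "\<nu> \<in> W_upper \<Phi> \<rho> \<mu>"
      unfolding W_upper_iff by blast
  qed
  with \<rho>' show "\<exists>\<rho>'\<in>P. Or \<Phi> \<rho>' \<mu>' \<subseteq> W_upper \<Phi> \<rho> \<mu>" by blast
qed

lemma n_invariant_W_lower:
  fixes \<Phi> :: "'n state \<Rightarrow> 'n state"
  assumes "W_lower \<Phi> \<rho> \<mu> \<noteq> {}" shows "n_invariant \<Phi> (W_lower \<Phi> \<rho> \<mu>)"
  unfolding n_invariant_def
proof (intro conjI ballI subsetI)
  fix \<mu>' \<rho>' \<nu> assume \<mu>': "\<mu>' \<in> W_lower \<Phi> \<rho> \<mu>" and \<rho>': "\<rho>' \<in> P" and \<nu>: "\<nu> \<in> Or \<Phi> \<rho>' \<mu>'"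
  show "\<nu> \<in> W_lower \<Phi> \<rho> \<mu>"
    unfolding W_lower_iff
  proof
    fix \<rho>'' :: "real \<Rightarrow> 'n state" assume "\<rho>'' \<in> P"
    then obtain \<rho>3 where \<rho>3: "\<rho>3 \<in> P"
      and splice: "\<forall>\<^sub>F s in at_top. orbit \<Phi> \<rho>3 \<mu>' s = orbit \<Phi> \<rho>'' \<nu> s"
      using orbit_splice[OF \<rho>' _ \<nu>] by blast
    from \<mu>' \<rho>3 have "\<forall>\<^sub>F s in at_top. orbit \<Phi> \<rho>3 \<mu>' s = orbit \<Phi> \<rho> \<mu> s"
      unfolding W_lower_iff by blast
    with splice show "\<forall>\<^sub>F s in at_top. orbit \<Phi> \<rho>'' \<nu> s = orbit \<Phi> \<rho> \<mu> s"
      by eventually_elim simp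
  qed
qed (rule assms)

lemma n_invariant_W_lower_omega:
  fixes \<Phi> :: "'n state \<Rightarrow> 'n state"
  assumes "W_lower_omega \<Phi> \<rho> \<mu> \<noteq> {}" shows "n_invariant \<Phi> (W_lower_omega \<Phi> \<rho> \<mu>)"
  unfolding n_invariant_def
proof (intro conjI ballI subsetI)
  fix \<mu>' \<rho>' \<nu> assume \<mu>': "\<mu>' \<in> W_lower_omega \<Phi> \<rho> \<mu>" and \<rho>': "\<rho>' \<in> P" and \<nu>: "\<nu> \<in> Or \<Phi> \<rho>' \<mu>'"
  show "\<nu> \<in> W_lower_omega \<Phi> \<rho> \<mu>"
    unfolding W_lower_omega_def
  proof (intro CollectI ballI)
    fix \<rho>'' :: "real \<Rightarrow> 'n state" assume "\<rho>'' \<in> P"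
    then obtain \<rho>3 where \<rho>3: "\<rho>3 \<in> P"
      and splice: "\<forall>\<^sub>F s in at_top. orbit \<Phi> \<rho>3 \<mu>' s = orbit \<Phi> \<rho>'' \<nu> s"
      using orbit_splice[OF \<rho>' _ \<nu>] by blast
    have "omega \<Phi> \<rho>'' \<nu> = omega \<Phi> \<rho>3 \<mu>'"
      by (rule omega_eq_if_eventually_eq[symmetric, OF splice])
    also have "\<dots> = omega \<Phi> \<rho> \<mu>"
      using \<mu>' \<rho>3 by (simp add: W_lower_omega_def)
    finally show "omega \<Phi> \<rho>'' \<nu> = omega \<Phi> \<rho> \<mu>" .
  qed
qed (rule assms)

theorem theorem52:
  fixes \<Phi> :: "('n::finite) state \<Rightarrow> 'n state" and \<mu> :: "'n state"
    and \<rho> :: "real \<Rightarrow> 'n state"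
  assumes "\<rho> \<in> P"
  shows "p_invariant \<Phi> (W_upper \<Phi> \<rho> \<mu>)
    \<and> (W_lower \<Phi> \<rho> \<mu> \<noteq> {} \<longrightarrow> n_invariant \<Phi> (W_lower \<Phi> \<rho> \<mu>))
    \<and> (W_lower_omega \<Phi> \<rho> \<mu> \<noteq> {} \<longrightarrow> n_invariant \<Phi> (W_lower_omega \<Phi> \<rho> \<mu>))"
  using p_invariant_W_upper[OF assms] n_invariant_W_lower n_invariant_W_lower_omega by blast

end
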